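(* Let $\sigma>0$, let $\mu_1,\ldots,\mu_n\in[0,1]$, and let $\mathcal{X}=\{x_1,\ldots,x_n\}\subseteq\mathbb{R}$ with $x_i=\mu_i+g_i$, where $g_1,\ldots,g_n$ are independent Gaussian random variables with mean $0$ and standard deviation $\sigma$. Then for every $\varepsilon>0$, the probability that $\mathcal{X}$ is not $\varepsilon$-spreaded is at most $\frac{2n^4\varepsilon^2}{\sigma^2}$.
   Context: $\mathcal{X}$ is $\varepsilon$-spreaded if (1) no interval of length $\varepsilon$ contains three or more points of $\mathcal{X}$, and (2) for any four points $x_1,x_2,x_3,x_4\in\mathcal{X}$, which are distinct except that $x_2$ and $x_3$ may be the same point, we have $|x_1-x_2|>\varepsilon$ or $|x_3-x_4|>\varepsilon$. *)

theory Defs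
  imports "HOL-Probability.Probability"
begin

definition spreaded :: "real \<Rightarrow> real set \<Rightarrow> bool" where
  "spreaded eps X \<longleftrightarrow>
     (\<forall>a::real. \<not> (3 \<le> card (X \<inter> {a..a+eps}) \<or> infinite (X \<inter> {a..a+eps}))) \<and>
     (\<forall>x1\<in>X. \<forall>x2\<in>X. \<forall>x3\<in>X. \<forall>x4\<in>X.
        (x1 \<noteq> x2 \<and> x1 \<noteq> x3 \<and> x1 \<noteq> x4 \<and> x2 \<noteq> x4 \<and> x3 \<noteq> x4) \<longrightarrow>
        (\<bar>x1 - x2\<bar> > eps \<or> \<bar>x3 - x4\<bar> > eps))"

definition gauss_vec :: "nat \<Rightarrow> real \<Rightarrow> (nat \<Rightarrow> real) measure" where
  "gauss_vec n s = PiM {..<n} (\<lambda>i. density lborel (normal_density 0 s))"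

end

theory Submission
  imports Defs
begin

text \<open>If \<open>X\<close> is not \<open>\<epsilon>\<close>-spreaded, there are indices \<open>i \<noteq> j\<close>, \<open>k \<noteq> l\<close> with \<open>i \<notin> {k, l}\<close> such that
  \<open>|x\<^sub>i - x\<^sub>j| \<le> \<epsilon>\<close> and \<open>|x\<^sub>k - x\<^sub>l| \<le> \<epsilon>\<close> (three points \<open>u < v < w\<close> within \<open>\<epsilon>\<close> give the pairs
  \<open>(u, v)\<close> and \<open>(w, v)\<close>). Conditioning on all coordinates except \<open>g\<^sub>i\<close>, the first event asks
  \<open>g\<^sub>i\<close> to lie in a fixed interval of length \<open>2\<epsilon>\<close>, which has Gaussian mass at most \<open>\<epsilon>/\<sigma>\<close>
  because the density is bounded by \<open>1/(2\<sigma>)\<close>; the second event, which does not involve \<open>g\<^sub>i\<close>,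
  is bounded the same way through \<open>g\<^sub>k\<close>. A union bound over at most \<open>n\<^sup>4\<close> index quadruples gives
  \<open>n\<^sup>4 \<epsilon>\<^sup>2/\<sigma>\<^sup>2\<close>.\<close>

lemma normal_density_le:
  fixes m s x :: real
  assumes "s > 0"
  shows "normal_density m s x \<le> 1 / (2 * s)"
proof -
  have "2 * s \<le> sqrt (2 * pi) * s"
    using assms pi_gt3 by (intro mult_right_mono) (auto simp: real_le_rsqrt)
  also have "\<dots> = sqrt (2 * pi * s\<^sup>2)"
    using assms by (simp add: real_sqrt_mult)
  finally have "1 / sqrt (2 * pi * s\<^sup>2) \<le> 1 / (2 * s)"
    using assms by (simp add: frac_le)
  moreover have "exp (- (x - m)\<^sup>2 / (2 * s\<^sup>2)) \<le> 1"
    by simp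
  ultimately have "1 / sqrt (2 * pi * s\<^sup>2) * exp (- (x - m)\<^sup>2 / (2 * s\<^sup>2)) \<le> 1 / (2 * s) * 1"
    using assms by (intro mult_mono) auto
  then show ?thesis
    unfolding normal_density_def by simp
qed

lemma emeasure_normal_Icc_le:
  fixes m s eps t :: real
  assumes "s > 0" "eps \<ge> 0"
  shows "emeasure (density lborel (normal_density m s)) {t - eps..t + eps} \<le> ennreal (eps / s)"
proof -
  have "emeasure (density lborel (normal_density m s)) {t - eps..t + eps}
      = (\<integral>\<^sup>+x. ennreal (normal_density m s x) * indicator {t - eps..t + eps} x \<partial>lborel)"
    by (simp add: emeasure_density)
  also have "\<dots> \<le> (\<integral>\<^sup>+x. ennreal (1 / (2 * s)) * indicator {t - eps..t + eps} x \<partial>lborel)"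
    using normal_density_le[OF assms(1)] by (intro nn_integral_mono mult_right_mono) (auto intro: ennreal_leI)
  also have "\<dots> = ennreal (1 / (2 * s)) * ennreal (2 * eps)"
    using assms by (simp add: nn_integral_cmult)
  also have "\<dots> = ennreal (eps / s)"
    using assms by (simp add: ennreal_mult[symmetric])
  finally show ?thesis .
qed

lemma three_points_in_interval_iff:
  fixes X :: "real set"
  assumes "finite X"
  shows "(\<exists>a. 3 \<le> card (X \<inter> {a..a + eps})) \<longleftrightarrow> (\<exists>u\<in>X. \<exists>v\<in>X. \<exists>w\<in>X. u < v \<and> v < w \<and> w - u \<le> eps)"
proof
  assume "\<exists>a. 3 \<le> card (X \<inter> {a..a + eps})"
  then obtain a T where T: "T \<subseteq> X \<inter> {a..a + eps}" "card T = 3"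
    by (meson obtain_subset_with_card_n)
  then have T_fin: "finite T" "T \<noteq> {}"
    by (auto intro: card_ge_0_finite)
  have "card (T - {Min T, Max T}) \<ge> 1"
    using T(2) card_Diff_subset[of "{Min T, Max T}" T] Min_in[OF T_fin] Max_in[OF T_fin]
    by (auto simp: card_insert_if)
  then obtain v where v: "v \<in> T" "v \<noteq> Min T" "v \<noteq> Max T"
    by (metis Diff_iff card_0_eq empty_iff insertCI not_one_le_zero ex_in_conv T_fin(1) finite_Diff)
  have "Min T < v" "v < Max T"
    using v Min_le[OF T_fin(1)] Max_ge[OF T_fin(1)] by (auto simp: order.order_iff_strict)
  moreover have "Max T - Min T \<le> eps"
  proof -
    have "Min T \<ge> a" "Max T \<le> a + eps"
      using T(1) Min_in[OF T_fin] Max_in[OF T_fin] by auto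
    then show ?thesis by simp
  qed
  ultimately show "\<exists>u\<in>X. \<exists>v\<in>X. \<exists>w\<in>X. u < v \<and> v < w \<and> w - u \<le> eps"
    using v(1) T(1) Min_in[OF T_fin] Max_in[OF T_fin] by blast
next
  assume "\<exists>u\<in>X. \<exists>v\<in>X. \<exists>w\<in>X. u < v \<and> v < w \<and> w - u \<le> eps"
  then obtain u v w where "u \<in> X" "v \<in> X" "w \<in> X" "u < v" "v < w" "w - u \<le> eps"
    by blast
  then have "{u, v, w} \<subseteq> X \<inter> {u..u + eps}" "card {u, v, w} = 3"
    by auto
  then show "\<exists>a. 3 \<le> card (X \<inter> {a..a + eps})"
    using card_mono[of "X \<inter> {u..u + eps}" "{u, v, w}"] assms by auto
qed

lemma spreaded_image_iff:
  fixes f :: "'a \<Rightarrow> real"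
  assumes "finite A"
  shows "spreaded eps (f ` A) \<longleftrightarrow>
    (\<forall>i\<in>A. \<forall>j\<in>A. \<forall>k\<in>A. f i < f j \<and> f j < f k \<longrightarrow> f k - f i > eps) \<and>
    (\<forall>i\<in>A. \<forall>j\<in>A. \<forall>k\<in>A. \<forall>l\<in>A.
       f i \<noteq> f j \<and> f i \<noteq> f k \<and> f i \<noteq> f l \<and> f j \<noteq> f l \<and> f k \<noteq> f l \<longrightarrow>
       \<bar>f i - f j\<bar> > eps \<or> \<bar>f k - f l\<bar> > eps)"
proof -
  have "finite (f ` A \<inter> {a..a + eps})" for a
    using assms by simp
  then have "(\<forall>a. \<not> (3 \<le> card (f ` A \<inter> {a..a + eps}) \<or> infinite (f ` A \<inter> {a..a + eps})))
      \<longleftrightarrow> \<not> (\<exists>a. 3 \<le> card (f ` A \<inter> {a..a + eps}))"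
    by blast
  also have "\<dots> \<longleftrightarrow> (\<forall>i\<in>A. \<forall>j\<in>A. \<forall>k\<in>A. f i < f j \<and> f j < f k \<longrightarrow> f k - f i > eps)"
    unfolding three_points_in_interval_iff[OF finite_imageI[OF assms]] by (auto simp: not_le)
  finally show ?thesis
    unfolding spreaded_def by (auto simp: not_less)
qed

lemma not_spreaded_imp_two_close_pairs:
  fixes f :: "'a \<Rightarrow> real"
  assumes "finite A" "\<not> spreaded eps (f ` A)"
  obtains i j k l where "i \<in> A" "j \<in> A" "k \<in> A" "l \<in> A" "i \<noteq> j" "k \<noteq> l" "i \<noteq> k" "i \<noteq> l"
    "\<bar>f i - f j\<bar> \<le> eps" "\<bar>f k - f l\<bar> \<le> eps"
proof -
  consider (three) i j k where "i \<in> A" "j \<in> A" "k \<in> A" "f i < f j" "f j < f k" "f k - f i \<le> eps"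
    | (four) i j k l where "i \<in> A" "j \<in> A" "k \<in> A" "l \<in> A"
        "f i \<noteq> f j" "f i \<noteq> f k" "f i \<noteq> f l" "f k \<noteq> f l" "\<bar>f i - f j\<bar> \<le> eps" "\<bar>f k - f l\<bar> \<le> eps"
    using assms unfolding spreaded_image_iff[OF assms(1)] by (auto simp: not_less)
  then show thesis
  proof cases
    case three
    then show thesis
      by (intro that[of i j k j]) auto
  next
    case four
    then show thesis
      by (intro that[of i j k l]) auto
  qed
qed

lemma emeasure_PiM_close_coordinate_le:
  fixes N :: "real measure" and p :: ennreal
  assumes N: "prob_space N" "sets N = sets borel"
    and anti: "\<And>t. emeasure N {t - eps..t + eps} \<le> p"
    and I: "finite I" "j \<in> I" "a \<in> I" "a \<noteq> j"
    and P_I[measurable]: "Measurable.pred (PiM I (\<lambda>_. N)) P"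
    and P_J[measurable]: "Measurable.pred (PiM (I - {j}) (\<lambda>_. N)) P"
    and P_indep: "\<And>g y. P (g(j := y)) = P g"
  shows "emeasure (PiM I (\<lambda>_. N)) {g \<in> space (PiM I (\<lambda>_. N)). \<bar>g j - g a + c\<bar> \<le> eps \<and> P g}
    \<le> p * emeasure (PiM (I - {j}) (\<lambda>_. N)) {g \<in> space (PiM (I - {j}) (\<lambda>_. N)). P g}"
proof -
  interpret product_sigma_finite "\<lambda>_. N"
    using N(1) by (simp add: product_sigma_finite_def prob_space_imp_sigma_finite)
  define J where "J = I - {j}"
  have IJ: "I = insert j J" "j \<notin> J" "finite J"
    using I by (auto simp: J_def)
  have space_N: "space N = UNIV"
    using sets_eq_imp_space_eq[OF N(2)] by simp
  define S where "S = {g \<in> space (PiM I (\<lambda>_. N)). \<bar>g j - g a + c\<bar> \<le> eps \<and> P g}"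
  define Q where "Q = {g \<in> space (PiM J (\<lambda>_. N)). P g}"
  have S_sets: "S \<in> sets (PiM I (\<lambda>_. N))"
    using I N(2) unfolding S_def by measurable
  have Q_sets: "Q \<in> sets (PiM J (\<lambda>_. N))"
    unfolding Q_def J_def by measurable
  have "emeasure (PiM I (\<lambda>_. N)) S = (\<integral>\<^sup>+x. (\<integral>\<^sup>+y. indicator S (x(j := y)) \<partial>N) \<partial>PiM J (\<lambda>_. N))"
    unfolding IJ(1) using IJ S_sets
    by (simp add: product_nn_integral_insert[symmetric] nn_integral_indicator[symmetric] del: nn_integral_indicator)
  also have "\<dots> \<le> (\<integral>\<^sup>+x. p * indicator Q x \<partial>PiM J (\<lambda>_. N))"
  proof (rule nn_integral_mono)
    fix x assume x: "x \<in> space (PiM J (\<lambda>_. N))"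
    then have "x(j := y) \<in> space (PiM I (\<lambda>_. N))" for y
      using IJ space_N by (auto simp: space_PiM PiE_iff extensional_def)
    then have "indicator S (x(j := y)) = (indicator Q x * indicator {x a - c - eps..x a - c + eps} y :: ennreal)" for y
      using x I(4) P_indep by (auto simp: S_def Q_def indicator_def abs_le_iff)
    then have "(\<integral>\<^sup>+y. indicator S (x(j := y)) \<partial>N) = indicator Q x * emeasure N {x a - c - eps..x a - c + eps}"
      using N(2) by (simp add: nn_integral_cmult_indicator)
    also have "\<dots> \<le> p * indicator Q x"
      using anti[of "x a - c"] by (simp add: indicator_def)
    finally show "(\<integral>\<^sup>+y. indicator S (x(j := y)) \<partial>N) \<le> p * indicator Q x" .
  qed
  also have "\<dots> = p * emeasure (PiM J (\<lambda>_. N)) Q"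
    using Q_sets by (simp add: nn_integral_cmult_indicator)
  finally show ?thesis
    unfolding S_def Q_def J_def .
qed

lemma emeasure_PiM_close_pair_le:
  fixes N :: "real measure" and p :: ennreal
  assumes N: "prob_space N" "sets N = sets borel"
    and anti: "\<And>t. emeasure N {t - eps..t + eps} \<le> p"
    and "finite I" "i \<in> I" "j \<in> I" "i \<noteq> j"
  shows "emeasure (PiM I (\<lambda>_. N)) {g \<in> space (PiM I (\<lambda>_. N)). \<bar>g i - g j + c\<bar> \<le> eps} \<le> p"
proof -
  interpret prob_space "PiM (I - {i}) (\<lambda>_. N)"
    using N(1) by (intro prob_space_PiM) auto
  have "emeasure (PiM I (\<lambda>_. N)) {g \<in> space (PiM I (\<lambda>_. N)). \<bar>g i - g j + c\<bar> \<le> eps \<and> True}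
      \<le> p * emeasure (PiM (I - {i}) (\<lambda>_. N)) {g \<in> space (PiM (I - {i}) (\<lambda>_. N)). True}"
    using assms by (intro emeasure_PiM_close_coordinate_le[OF N anti]) auto
  then show ?thesis
    by (simp add: emeasure_space_1)
qed

lemma emeasure_PiM_two_close_pairs_le:
  fixes N :: "real measure" and p :: ennreal
  assumes N: "prob_space N" "sets N = sets borel"
    and anti: "\<And>t. emeasure N {t - eps..t + eps} \<le> p"
    and I: "finite I" "i \<in> I" "j \<in> I" "k \<in> I" "l \<in> I" "i \<noteq> j" "k \<noteq> l" "i \<noteq> k" "i \<noteq> l"
  shows "emeasure (PiM I (\<lambda>_. N))
      {g \<in> space (PiM I (\<lambda>_. N)). \<bar>g i - g j + c\<bar> \<le> eps \<and> \<bar>g k - g l + d\<bar> \<le> eps} \<le> p * p"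
proof -
  have "emeasure (PiM I (\<lambda>_. N))
      {g \<in> space (PiM I (\<lambda>_. N)). \<bar>g i - g j + c\<bar> \<le> eps \<and> \<bar>g k - g l + d\<bar> \<le> eps}
    \<le> p * emeasure (PiM (I - {i}) (\<lambda>_. N)) {g \<in> space (PiM (I - {i}) (\<lambda>_. N)). \<bar>g k - g l + d\<bar> \<le> eps}"
  proof (rule emeasure_PiM_close_coordinate_le[OF N anti I(1-3)])
    show "j \<noteq> i"
      using I by auto
    show "Measurable.pred (PiM I (\<lambda>_. N)) (\<lambda>g. \<bar>g k - g l + d\<bar> \<le> eps)"
      using I N(2) by measurable
    have "k \<in> I - {i}" "l \<in> I - {i}"
      using I by auto
    then show "Measurable.pred (PiM (I - {i}) (\<lambda>_. N)) (\<lambda>g. \<bar>g k - g l + d\<bar> \<le> eps)"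
      using N(2) by measurable
    show "(\<bar>(g(i := y)) k - (g(i := y)) l + d\<bar> \<le> eps) = (\<bar>g k - g l + d\<bar> \<le> eps)" for g y
      using I by simp
  qed
  also have "\<dots> \<le> p * p"
    using I by (intro mult_left_mono emeasure_PiM_close_pair_le[OF N anti]) auto
  finally show ?thesis .
qed

lemma pred_eq_borel_measurable[measurable (raw)]:
  fixes f g :: "'a \<Rightarrow> 'b::{second_countable_topology, t2_space}"
  assumes "f \<in> borel_measurable M" "g \<in> borel_measurable M"
  shows "Measurable.pred M (\<lambda>x. f x = g x)"
  using measurable_equality_set[OF assms] by (simp add: pred_def)

lemma sets_PiM_not_spreaded:
  fixes N :: "real measure" and mu :: "'a \<Rightarrow> real"
  assumes "sets N = sets borel" "finite I"
  shows "{g \<in> space (PiM I (\<lambda>_. N)). \<not> spreaded eps ((\<lambda>i. mu i + g i) ` I)} \<in> sets (PiM I (\<lambda>_. N))"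
  unfolding spreaded_image_iff[OF assms(2)] using assms by measurable

lemma measure_PiM_not_spreaded_le:
  fixes N :: "real measure" and mu :: "'a \<Rightarrow> real" and p :: real
  assumes N: "prob_space N" "sets N = sets borel"
    and anti: "\<And>t. emeasure N {t - eps..t + eps} \<le> ennreal p"
    and "0 \<le> p" "finite I"
  shows "measure (PiM I (\<lambda>_. N)) {g \<in> space (PiM I (\<lambda>_. N)). \<not> spreaded eps ((\<lambda>i. mu i + g i) ` I)}
    \<le> real (card I) ^ 4 * p\<^sup>2"
proof -
  define M where "M = PiM I (\<lambda>_. N)"
  interpret prob_space M
    unfolding M_def using N(1) by (intro prob_space_PiM) auto
  define Q where "Q = {(i, j, k, l). i \<in> I \<and> j \<in> I \<and> k \<in> I \<and> l \<in> I \<and> i \<noteq> j \<and> k \<noteq> l \<and> i \<noteq> k \<and> i \<noteq> l}"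
  define E where "E = (\<lambda>(i, j, k, l). {g \<in> space M.
    \<bar>g i - g j + (mu i - mu j)\<bar> \<le> eps \<and> \<bar>g k - g l + (mu k - mu l)\<bar> \<le> eps})"
  have Q_sub: "Q \<subseteq> I \<times> I \<times> I \<times> I"
    by (auto simp: Q_def)
  have Q_fin: "finite Q"
    using finite_subset[OF Q_sub] \<open>finite I\<close> by simp
  have "card Q \<le> card (I \<times> I \<times> I \<times> I)"
    using Q_sub \<open>finite I\<close> by (intro card_mono) auto
  then have Q_card: "card Q \<le> card I ^ 4"
    by (simp add: card_cartesian_product power4_eq_xxxx)
  have E_sets: "E t \<in> events" if "t \<in> Q" for t
    using that N(2) unfolding E_def M_def Q_def by (cases t) simp
  have E_le: "measure M (E t) \<le> p\<^sup>2" if "t \<in> Q" for t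
  proof -
    obtain i j k l where t: "t = (i, j, k, l)"
      by (cases t)
    have "emeasure M (E t) \<le> ennreal p * ennreal p"
      using that \<open>finite I\<close> unfolding t E_def M_def Q_def
      by (auto intro: emeasure_PiM_two_close_pairs_le[OF N anti])
    then show ?thesis
      unfolding emeasure_eq_measure
      using \<open>0 \<le> p\<close> by (simp add: ennreal_mult'[symmetric] power2_eq_square)
  qed
  have "{g \<in> space M. \<not> spreaded eps ((\<lambda>i. mu i + g i) ` I)} \<subseteq> (\<Union>t\<in>Q. E t)"
  proof safe
    fix g assume g: "g \<in> space M" "\<not> spreaded eps ((\<lambda>i. mu i + g i) ` I)"
    show "g \<in> (\<Union>t\<in>Q. E t)"
    proof (rule not_spreaded_imp_two_close_pairs[OF \<open>finite I\<close> g(2)])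
      fix i j k l
      assume "i \<in> I" "j \<in> I" "k \<in> I" "l \<in> I" "i \<noteq> j" "k \<noteq> l" "i \<noteq> k" "i \<noteq> l"
        "\<bar>mu i + g i - (mu j + g j)\<bar> \<le> eps" "\<bar>mu k + g k - (mu l + g l)\<bar> \<le> eps"
      then have "(i, j, k, l) \<in> Q" "g \<in> E (i, j, k, l)"
        using g(1) by (auto simp: Q_def E_def algebra_simps)
      then show "g \<in> (\<Union>t\<in>Q. E t)"
        by blast
    qed
  qed
  then have "measure M {g \<in> space M. \<not> spreaded eps ((\<lambda>i. mu i + g i) ` I)} \<le> measure M (\<Union>t\<in>Q. E t)"
    using Q_fin E_sets by (intro finite_measure_mono) auto
  also have "\<dots> \<le> (\<Sum>t\<in>Q. measure M (E t))"
    using Q_fin E_sets by (intro finite_measure_subadditive_finite) auto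
  also have "\<dots> \<le> real (card Q) * p\<^sup>2"
    using sum_mono[OF E_le] by simp
  also have "\<dots> \<le> real (card I) ^ 4 * p\<^sup>2"
    using Q_card by (intro mult_right_mono) (auto simp flip: of_nat_power)
  finally show ?thesis
    unfolding M_def .
qed

theorem lemma20:
  fixes s eps :: real and n :: nat and mu :: "nat \<Rightarrow> real"
  assumes "s > 0" and "eps > 0"
    and "\<And>i. i < n \<Longrightarrow> mu i \<in> {0..1}"
  shows "{g \<in> space (gauss_vec n s). \<not> spreaded eps ((\<lambda>i. mu i + g i) ` {..<n})}
           \<in> sets (gauss_vec n s)
       \<and> measure (gauss_vec n s)
           {g \<in> space (gauss_vec n s). \<not> spreaded eps ((\<lambda>i. mu i + g i) ` {..<n})}
         \<le> 2 * real n ^ 4 * eps\<^sup>2 / s\<^sup>2"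
proof
  let ?N = "density lborel (normal_density 0 s)"
  have N: "prob_space ?N" "sets ?N = sets borel"
    using prob_space_normal_density[OF \<open>s > 0\<close>] by auto
  show "{g \<in> space (gauss_vec n s). \<not> spreaded eps ((\<lambda>i. mu i + g i) ` {..<n})} \<in> sets (gauss_vec n s)"
    unfolding gauss_vec_def using N(2) by (intro sets_PiM_not_spreaded) auto
  have anti: "emeasure ?N {t - eps..t + eps} \<le> ennreal (eps / s)" for t
    using emeasure_normal_Icc_le assms by simp
  have "measure (gauss_vec n s) {g \<in> space (gauss_vec n s). \<not> spreaded eps ((\<lambda>i. mu i + g i) ` {..<n})}
      \<le> real n ^ 4 * (eps / s)\<^sup>2"
    unfolding gauss_vec_def
    using measure_PiM_not_spreaded_le[where mu = mu, OF N anti _ finite_lessThan] assms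
    by simp
  also have "\<dots> \<le> 2 * (real n ^ 4 * (eps / s)\<^sup>2)"
    by simp
  also have "\<dots> = 2 * real n ^ 4 * eps\<^sup>2 / s\<^sup>2"
    by (simp add: power_divide)
  finally show "measure (gauss_vec n s)
      {g \<in> space (gauss_vec n s). \<not> spreaded eps ((\<lambda>i. mu i + g i) ` {..<n})} \<le> 2 * real n ^ 4 * eps\<^sup>2 / s\<^sup>2" .
qed

end
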